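(* Let $G$ be an abelian Hausdorff topological group and $A\subseteq G$ with $0\notin A$. The following conditions are equivalent: (i) the Kalton map $K_A:S_A\to\overline{G}$ is continuous and its continuous extension $\overline{K_A}:P_A\to\overline{G}$ is a topologically isomorphic embedding satisfying $\overline{K_A}(P_A)\subseteq G$; (ii) the set $A$ is both absolutely summable and topologically independent in $G$.
   Context: All groups are abelian; topological groups are Hausdorff; $\overline{H}$ denotes the (Raikov) completion of a topological group $H$. For $a\in G$, $\langle a\rangle$ is the cyclic subgroup generated by $a$ with the subspace topology. $P_A=\prod_{a\in A}\langle a\rangle$ has the Tychonoff product topology and $S_A=\bigoplus_{a\in A}\langle a\rangle\subseteq P_A$ the subspace topology. The Kalton map $K_A:S_A\to G$ is the unique homomorphism extending each inclusion $\langle a\rangle\to G$. When $K_A$ is continuous it extends uniquely to a continuous homomorphism $\overline{S_A}\to\overline G$; since $\overline{S_A}=\prod_{a\in A}\overline{\langle a\rangle}\supseteq P_A$, its restriction to $P_A$ is denoted $\overline{K_A}:P_A\to\overline G$. $A$ is absolutely summable if for every family $\{z_a:a\in A\}$ of integers there is $g\in G$ such that for every neighbourhood $U$ of $0$ there is a finite $F\subseteq A$ with $g-\sum_{a\in E}z_aa\in U$ for every finite $E\subseteq A$ containing $F$. $A$ is topologically independent if $0\notin A$ and for every neighbourhood $W$ of $0$ there is a neighbourhood $U$ of $0$ such that for every finite $F\subseteq A$ and all integers $\{z_a:a\in F\}$, $\sum_{a\in F}z_aa\in U$ implies $z_aa\in W$ for all $a\in F$. *)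

theory Defs
  imports "HOL-Analysis.Analysis"
begin

definition zsmul :: "int \<Rightarrow> 'a::ab_group_add \<Rightarrow> 'a" where
  "zsmul k a = (if 0 \<le> k then (\<Sum>_\<in>{..<nat k}. a) else - (\<Sum>_\<in>{..<nat (- k)}. a))"

definition cyc :: "'a::ab_group_add \<Rightarrow> 'a set" where
  "cyc a = range (\<lambda>k. zsmul k a)"

text \<open>P_A: the Tychonoff product of the cyclic subgroups (subspace topologies).
  Elements are the functions f with f a in cyc a for a in A and f a = undefined outside A.\<close>
definition PA_top :: "'a::{topological_ab_group_add,t2_space} set \<Rightarrow> ('a \<Rightarrow> 'a) topology" where
  "PA_top A = product_topology (\<lambda>a. subtopology euclidean (cyc a)) A"

definition SA :: "'a::{topological_ab_group_add,t2_space} set \<Rightarrow> ('a \<Rightarrow> 'a) set" where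
  "SA A = {f \<in> topspace (PA_top A). finite {a \<in> A. f a \<noteq> 0}}"

definition SA_top :: "'a::{topological_ab_group_add,t2_space} set \<Rightarrow> ('a \<Rightarrow> 'a) topology" where
  "SA_top A = subtopology (PA_top A) (SA A)"

definition kalton :: "'a::ab_group_add set \<Rightarrow> ('a \<Rightarrow> 'a) \<Rightarrow> 'a" where
  "kalton A f = (\<Sum>a\<in>{a \<in> A. f a \<noteq> 0}. f a)"

definition absolutely_summable :: "'a::{topological_ab_group_add,t2_space} set \<Rightarrow> bool" where
  "absolutely_summable A \<longleftrightarrow>
     (\<forall>z :: 'a \<Rightarrow> int. \<exists>g. \<forall>U. open U \<and> 0 \<in> U \<longrightarrow>
        (\<exists>F. finite F \<and> F \<subseteq> A \<and>
           (\<forall>E. finite E \<and> F \<subseteq> E \<and> E \<subseteq> A \<longrightarrow> g - (\<Sum>a\<in>E. zsmul (z a) a) \<in> U)))"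

definition top_independent :: "'a::{topological_ab_group_add,t2_space} set \<Rightarrow> bool" where
  "top_independent A \<longleftrightarrow> 0 \<notin> A \<and>
     (\<forall>W. open W \<and> 0 \<in> W \<longrightarrow> (\<exists>U. open U \<and> 0 \<in> U \<and>
        (\<forall>F (z :: 'a \<Rightarrow> int). finite F \<and> F \<subseteq> A \<and> (\<Sum>a\<in>F. zsmul (z a) a) \<in> U \<longrightarrow>
            (\<forall>a\<in>F. zsmul (z a) a \<in> W))))"

end

theory Submission
  imports Defs
begin

(*
  The extension of the Kalton map is the summation map f |-> sum_{a in A} f a on P_A.

  (ii) => (i): absolute summability makes the summation map defined on all of P_A.  It is
  continuous because of a uniform Cauchy property: for every neighbourhood W of 0 there is a
  finite F in A such that all finite integer combinations of elements of A - F lie in W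
  (otherwise pairwise disjoint bad blocks could be glued into a single non-summable family).
  Topological independence passes from finite to infinite sums: if sum f is near 0, then every
  coordinate f a is near 0.  This makes the summation map injective and open onto its image.

  (i) => (ii): finitely supported elements converge in P_A to any element, so continuity of the
  extension yields summability.  A basic neighbourhood of 0 in P_A restricts only finitely many
  coordinates; openness of the embedding handles those, continuity all the others.
*)

lemma sum_const_lessThan_add:
  fixes m n :: nat and a :: "'a::comm_monoid_add"
  shows "(\<Sum>_\<in>{..<m + n}. a) = (\<Sum>_\<in>{..<m}. a) + (\<Sum>_\<in>{..<n}. a)"
  by (induction n) (auto simp: add.assoc)

lemma zsmul_int_diff: "zsmul (int m - int n) a = (\<Sum>_\<in>{..<m}. a) - (\<Sum>_\<in>{..<n}. a)"
proof (cases "n \<le> m")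
  case True
  then have "m = (m - n) + n" by simp
  then have "(\<Sum>_\<in>{..<m}. a) = (\<Sum>_\<in>{..<m - n}. a) + (\<Sum>_\<in>{..<n}. a)"
    by (metis sum_const_lessThan_add)
  with True show ?thesis by (simp add: zsmul_def nat_diff_distrib')
next
  case False
  then have "n = (n - m) + m" by simp
  then have "(\<Sum>_\<in>{..<n}. a) = (\<Sum>_\<in>{..<n - m}. a) + (\<Sum>_\<in>{..<m}. a)"
    by (metis sum_const_lessThan_add)
  with False show ?thesis by (simp add: zsmul_def nat_diff_distrib')
qed

lemma zsmul_diff: "zsmul k a - zsmul l a = zsmul (k - l) a"
proof -
  obtain p q r s where k: "k = int p - int q" and l: "l = int r - int s"
    by (metis int_diff_cases)
  have "zsmul k a - zsmul l a = ((\<Sum>_\<in>{..<p}. a) - (\<Sum>_\<in>{..<q}. a)) - ((\<Sum>_\<in>{..<r}. a) - (\<Sum>_\<in>{..<s}. a))"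
    by (simp add: k l zsmul_int_diff)
  also have "\<dots> = (\<Sum>_\<in>{..<p + s}. a) - (\<Sum>_\<in>{..<q + r}. a)"
    by (simp add: sum_const_lessThan_add algebra_simps)
  also have "\<dots> = zsmul (k - l) a"
    by (simp add: k l algebra_simps flip: zsmul_int_diff)
  finally show ?thesis .
qed

lemma zsmul_0 [simp]: "zsmul 0 a = 0"
  by (simp add: zsmul_def)

lemma zsmul_in_cyc [simp]: "zsmul k a \<in> cyc a"
  by (simp add: cyc_def)

lemma zero_in_cyc [simp]: "0 \<in> cyc a"
  using zsmul_in_cyc[of 0 a] by simp

lemma cyc_diff: "x \<in> cyc a \<Longrightarrow> y \<in> cyc a \<Longrightarrow> x - y \<in> cyc a"
  unfolding cyc_def by (auto simp: zsmul_diff)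

lemma nhds_0_half:
  fixes W :: "'a::topological_group_add set"
  assumes "open W" "0 \<in> W"
  obtains V where "open V" "0 \<in> V" "\<And>x y. x \<in> V \<Longrightarrow> y \<in> V \<Longrightarrow> x + y \<in> W"
    "\<And>x y. x \<in> V \<Longrightarrow> y \<in> V \<Longrightarrow> x - y \<in> W"
proof -
  have "((\<lambda>p. fst p + snd p) \<longlongrightarrow> fst (0::'a, 0::'a) + snd (0::'a, 0::'a)) (nhds (0, 0))"
    "((\<lambda>p. fst p - snd p) \<longlongrightarrow> fst (0::'a, 0::'a) - snd (0::'a, 0::'a)) (nhds (0, 0))"
    by (intro tendsto_add tendsto_diff tendsto_fst tendsto_snd filterlim_ident)+
  then have "((\<lambda>p. fst p + snd p) \<longlongrightarrow> 0) (nhds (0::'a, 0::'a))"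
    "((\<lambda>p. fst p - snd p) \<longlongrightarrow> 0) (nhds (0::'a, 0::'a))"
    by simp_all
  then have "\<forall>\<^sub>F p in nhds 0 \<times>\<^sub>F nhds 0. fst p + snd p \<in> W \<and> fst p - snd p \<in> W"
    using assms by (auto simp: eventually_conj_iff nhds_prod[symmetric] dest: topological_tendstoD)
  then obtain Q where "eventually Q (nhds 0)" "\<And>x y. Q x \<Longrightarrow> Q y \<Longrightarrow> x + y \<in> W \<and> x - y \<in> W"
    by (auto simp: eventually_prod_same)
  then show ?thesis
    using that by (auto simp: eventually_nhds)
qed

lemma has_sum_iff_nhds_0:
  fixes f :: "'b \<Rightarrow> 'a::topological_ab_group_add"
  shows "(f has_sum g) A \<longleftrightarrow> (\<forall>U. open U \<and> 0 \<in> U \<longrightarrow>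
           (\<exists>F. finite F \<and> F \<subseteq> A \<and> (\<forall>E. finite E \<and> F \<subseteq> E \<and> E \<subseteq> A \<longrightarrow> g - sum f E \<in> U)))"
proof -
  have "(f has_sum g) A \<longleftrightarrow> ((\<lambda>E. g - sum f E) \<longlongrightarrow> 0) (finite_subsets_at_top A)"
    unfolding has_sum_def
  proof
    assume "(sum f \<longlongrightarrow> g) (finite_subsets_at_top A)"
    from tendsto_diff[OF tendsto_const this, of g] show "((\<lambda>E. g - sum f E) \<longlongrightarrow> 0) (finite_subsets_at_top A)"
      by simp
  next
    assume "((\<lambda>E. g - sum f E) \<longlongrightarrow> 0) (finite_subsets_at_top A)"
    from tendsto_diff[OF tendsto_const this, of g] show "(sum f \<longlongrightarrow> g) (finite_subsets_at_top A)"
      by simp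
  qed
  then show ?thesis
    by (simp add: tendsto_def eventually_finite_subsets_at_top imp_conjL)
qed

lemma infsum_diff:
  fixes f g :: "'b \<Rightarrow> 'a::{topological_ab_group_add,t2_space}"
  assumes "f summable_on A" "g summable_on A"
  shows "infsum (\<lambda>x. f x - g x) A = infsum f A - infsum g A"
proof -
  have "infsum (\<lambda>x. f x + - g x) A = infsum f A + infsum (\<lambda>x. - g x) A"
    using assms by (intro infsum_add) (simp_all add: summable_on_uminus)
  then show ?thesis
    by (simp add: infsum_uminus)
qed

lemma infsum_split_finite:
  fixes f :: "'b \<Rightarrow> 'a::{topological_ab_group_add,t2_space}"
  assumes "f summable_on A" "finite F" "F \<subseteq> A"
  shows "infsum f A = sum f F + infsum f (A - F)"
proof -
  have "infsum f (F \<union> (A - F)) = infsum f F + infsum f (A - F)"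
    using assms by (intro infsum_Un_disjoint summable_on_cofin_subset) auto
  with assms show ?thesis
    by (simp add: Un_absorb1)
qed

lemma has_sum_nhds_0E:
  fixes f :: "'b \<Rightarrow> 'a::topological_ab_group_add"
  assumes "(f has_sum g) A" "open U" "0 \<in> U"
  obtains F where "finite F" "F \<subseteq> A"
    "\<And>E. finite E \<Longrightarrow> F \<subseteq> E \<Longrightarrow> E \<subseteq> A \<Longrightarrow> g - sum f E \<in> U"
proof -
  have "\<exists>F. finite F \<and> F \<subseteq> A \<and> (\<forall>E. finite E \<and> F \<subseteq> E \<and> E \<subseteq> A \<longrightarrow> g - sum f E \<in> U)"
    using assms(1)[unfolded has_sum_iff_nhds_0, rule_format, OF conjI[OF assms(2,3)]] .
  then show ?thesis
    using that by metis
qed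

lemma summable_on_Cauchy:
  fixes f :: "'b \<Rightarrow> 'a::topological_ab_group_add"
  assumes "f summable_on A" "open W" "0 \<in> W"
  obtains F where "finite F" "F \<subseteq> A" "\<And>E. finite E \<Longrightarrow> E \<subseteq> A - F \<Longrightarrow> sum f E \<in> W"
proof -
  obtain V where V: "open V" "0 \<in> V" "\<And>x y. x \<in> V \<Longrightarrow> y \<in> V \<Longrightarrow> x + y \<in> W"
    "\<And>x y. x \<in> V \<Longrightarrow> y \<in> V \<Longrightarrow> x - y \<in> W"
    using nhds_0_half[OF assms(2,3)] by metis
  obtain g where g: "(f has_sum g) A"
    using assms(1) summable_on_def by blast
  obtain F where F: "finite F" "F \<subseteq> A"
    "\<And>E. finite E \<Longrightarrow> F \<subseteq> E \<Longrightarrow> E \<subseteq> A \<Longrightarrow> g - sum f E \<in> V"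
    using has_sum_nhds_0E[OF g V(1,2)] by metis
  have "sum f E \<in> W" if "finite E" "E \<subseteq> A - F" for E
  proof -
    have "sum f (F \<union> E) = sum f F + sum f E"
      using F(1) that by (intro sum.union_disjoint) auto
    then have "sum f E = (g - sum f F) - (g - sum f (F \<union> E))"
      by simp
    also have "\<dots> \<in> W"
      using F(1,2) that by (intro V(4) F(3)) auto
    finally show ?thesis .
  qed
  then show ?thesis
    using F(1,2) that by metis
qed

lemma disjoint_sequence_avoiding_finite_sets:
  assumes "\<And>F. finite F \<Longrightarrow> F \<subseteq> A \<Longrightarrow> \<exists>E. finite E \<and> E \<subseteq> A - F \<and> P E"
  obtains E :: "nat \<Rightarrow> 'a set"
  where "disjoint_family E" "\<And>n. finite (E n)" "\<And>n. E n \<subseteq> A" "\<And>n. P (E n)"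
proof -
  have "\<forall>F\<in>{F. finite F \<and> F \<subseteq> A}. \<exists>E. finite E \<and> E \<subseteq> A - F \<and> P E"
    using assms by blast
  then obtain next_set where next_set:
    "\<And>F. finite F \<Longrightarrow> F \<subseteq> A \<Longrightarrow> finite (next_set F) \<and> next_set F \<subseteq> A - F \<and> P (next_set F)"
    by (metis (no_types, lifting) bchoice mem_Collect_eq)
  define S where "S = rec_nat {} (\<lambda>_ S. S \<union> next_set S)"
  define E where "E n = next_set (S n)" for n
  have S_simps: "S 0 = {}" "S (Suc n) = S n \<union> E n" for n
    by (simp_all add: S_def E_def)
  have S: "finite (S n) \<and> S n \<subseteq> A" for n
    by (induction n) (use next_set in \<open>auto simp: S_simps E_def\<close>)
  then have E: "finite (E n)" "E n \<subseteq> A - S n" "P (E n)" for n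
    using next_set unfolding E_def by blast+
  have E_in_S: "E m \<subseteq> S n" if "m < n" for m n
    using that by (induction n) (auto simp: S_simps less_Suc_eq)
  have "E m \<inter> E n = {}" if "m < n" for m n
    using E(2)[of n] E_in_S[OF that] by blast
  then have "disjoint_family E"
    unfolding disjoint_family_on_def by (metis Int_commute linorder_neq_iff)
  with E show ?thesis
    using that by blast
qed

lemma topspace_PA_top: "topspace (PA_top A) = (\<Pi>\<^sub>E a\<in>A. cyc a)"
  by (simp add: PA_top_def)

lemma continuous_map_PA_top_coordinate:
  assumes "a \<in> A"
  shows "continuous_map (PA_top A) euclidean (\<lambda>f. f a)"
  using continuous_map_product_projection[OF assms, of "\<lambda>a. subtopology euclidean (cyc a)"]
  by (simp add: PA_top_def continuous_map_in_subtopology)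

lemma Pi_cyc_coefficients:
  assumes "f \<in> (\<Pi> a\<in>A. cyc a)"
  obtains z where "\<And>a. a \<in> A \<Longrightarrow> f a = zsmul (z a) a"
proof -
  have "\<forall>a\<in>A. \<exists>k. f a = zsmul k a"
    using assms by (auto simp: cyc_def)
  then show ?thesis
    using that by metis
qed

lemma absolutely_summable_iff:
  "absolutely_summable A \<longleftrightarrow> (\<forall>z. (\<lambda>a. zsmul (z a) a) summable_on A)"
  by (simp add: absolutely_summable_def summable_on_def has_sum_iff_nhds_0)

lemma summable_on_Pi_cyc:
  assumes "absolutely_summable A" "f \<in> (\<Pi> a\<in>A. cyc a)"
  shows "f summable_on A"
proof -
  obtain z where z: "\<And>a. a \<in> A \<Longrightarrow> f a = zsmul (z a) a"
    using Pi_cyc_coefficients[OF assms(2)] by metis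
  have "f summable_on A \<longleftrightarrow> (\<lambda>a. zsmul (z a) a) summable_on A"
    by (rule summable_on_cong) (rule z)
  with assms(1) show ?thesis
    by (simp add: absolutely_summable_iff)
qed

lemma infsum_SA:
  assumes "f \<in> SA A"
  shows "infsum f A = kalton A f"
proof -
  have "infsum f A = infsum f {a \<in> A. f a \<noteq> 0}"
    by (rule infsum_cong_neutral) auto
  also have "\<dots> = kalton A f"
    using assms by (simp add: SA_def kalton_def)
  finally show ?thesis .
qed

lemma absolutely_summable_uniformly_Cauchy:
  assumes "absolutely_summable A" "open W" "0 \<in> W"
  obtains F where "finite F" "F \<subseteq> A"
    "\<And>E z. finite E \<Longrightarrow> E \<subseteq> A - F \<Longrightarrow> (\<Sum>a\<in>E. zsmul (z a) a) \<in> W"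
proof -
  have "\<exists>F. finite F \<and> F \<subseteq> A \<and> (\<forall>E z. finite E \<and> E \<subseteq> A - F \<longrightarrow> (\<Sum>a\<in>E. zsmul (z a) a) \<in> W)"
  proof (rule ccontr)
    \<comment> \<open>Glue disjoint blocks with large sums into one family that violates the Cauchy criterion.\<close>
    assume "\<nexists>F. finite F \<and> F \<subseteq> A \<and> (\<forall>E z. finite E \<and> E \<subseteq> A - F \<longrightarrow> (\<Sum>a\<in>E. zsmul (z a) a) \<in> W)"
    then have bad: "\<exists>E. finite E \<and> E \<subseteq> A - F \<and> (\<exists>z. (\<Sum>a\<in>E. zsmul (z a) a) \<notin> W)"
      if "finite F" "F \<subseteq> A" for F
      using that by auto
    obtain E :: "nat \<Rightarrow> _" where E: "disjoint_family E" "\<And>n. finite (E n)" "\<And>n. E n \<subseteq> A"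
      "\<And>n. \<exists>z. (\<Sum>a\<in>E n. zsmul (z a) a) \<notin> W"
      using disjoint_sequence_avoiding_finite_sets[OF bad] by metis
    obtain z where z: "\<And>n. (\<Sum>a\<in>E n. zsmul (z n a) a) \<notin> W"
      using E(4) by metis
    define block where "block a = (SOME n. a \<in> E n)" for a
    have block: "block a = n" if "a \<in> E n" for a n
      using someI[of "\<lambda>n. a \<in> E n", OF that] E(1) that
      unfolding block_def disjoint_family_on_def by blast
    define glued where "glued a = z (block a) a" for a
    have "(\<lambda>a. zsmul (glued a) a) summable_on A"
      using assms(1) absolutely_summable_iff by blast
    then obtain F where F: "finite F" "F \<subseteq> A"
      "\<And>E. finite E \<Longrightarrow> E \<subseteq> A - F \<Longrightarrow> (\<Sum>a\<in>E. zsmul (glued a) a) \<in> W"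
      by (rule summable_on_Cauchy[OF _ assms(2,3)]) (rule that)
    obtain N where N: "N \<notin> block ` F"
      using F(1) ex_new_if_finite[OF infinite_UNIV_nat] by blast
    have "E N \<subseteq> A - F"
    proof
      fix a
      assume "a \<in> E N"
      then have "a \<in> A" "block a = N"
        using E(3) block by auto
      with N show "a \<in> A - F"
        by auto
    qed
    then have "(\<Sum>a\<in>E N. zsmul (glued a) a) \<in> W"
      by (rule F(3)[OF E(2)])
    moreover have "(\<Sum>a\<in>E N. zsmul (glued a) a) = (\<Sum>a\<in>E N. zsmul (z N a) a)"
      using block by (intro sum.cong) (auto simp: glued_def)
    ultimately show False
      using z by simp
  qed
  then show ?thesis
    using that by metis
qed

lemma absolutely_summable_uniform_tail:
  assumes "absolutely_summable A" "open W" "0 \<in> W"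
  obtains F where "finite F" "F \<subseteq> A" "\<And>f. f \<in> (\<Pi> a\<in>A. cyc a) \<Longrightarrow> infsum f (A - F) \<in> W"
proof -
  obtain V where V: "open V" "0 \<in> V" "\<And>x y. x \<in> V \<Longrightarrow> y \<in> V \<Longrightarrow> x + y \<in> W"
    "\<And>x y. x \<in> V \<Longrightarrow> y \<in> V \<Longrightarrow> x - y \<in> W"
    using nhds_0_half[OF assms(2,3)] by metis
  obtain F where F: "finite F" "F \<subseteq> A"
    "\<And>E z. finite E \<Longrightarrow> E \<subseteq> A - F \<Longrightarrow> (\<Sum>a\<in>E. zsmul (z a) a) \<in> V"
    using absolutely_summable_uniformly_Cauchy[OF assms(1) V(1,2)] by metis
  have "infsum f (A - F) \<in> W" if f: "f \<in> (\<Pi> a\<in>A. cyc a)" for f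
  proof -
    obtain z where z: "\<And>a. a \<in> A \<Longrightarrow> f a = zsmul (z a) a"
      using Pi_cyc_coefficients[OF f] by metis
    have "f summable_on (A - F)"
      using summable_on_cofin_subset[OF summable_on_Pi_cyc[OF assms(1) f] F(1)] .
    from has_sum_nhds_0E[OF has_sum_infsum[OF this] V(1,2)]
    obtain E where E: "finite E" "E \<subseteq> A - F"
      "\<And>E'. finite E' \<Longrightarrow> E \<subseteq> E' \<Longrightarrow> E' \<subseteq> A - F \<Longrightarrow> infsum f (A - F) - sum f E' \<in> V"
      by metis
    have "sum f E = (\<Sum>a\<in>E. zsmul (z a) a)"
      using E(2) z by (intro sum.cong) auto
    then have "sum f E \<in> V"
      using F(3)[OF E(1,2)] by simp
    moreover have "infsum f (A - F) - sum f E \<in> V"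
      by (rule E(3)[OF E(1) order_refl E(2)])
    ultimately have "(infsum f (A - F) - sum f E) + sum f E \<in> W"
      by (intro V(3))
    then show ?thesis
      by simp
  qed
  then show ?thesis
    using F(1,2) that by metis
qed

lemma topspace_PA_topD: "f \<in> topspace (PA_top A) \<Longrightarrow> f \<in> (\<Pi> a\<in>A. cyc a)"
  by (simp add: topspace_PA_top PiE_iff)

lemma Pi_cyc_diff:
  "f \<in> (\<Pi> a\<in>A. cyc a) \<Longrightarrow> g \<in> (\<Pi> a\<in>A. cyc a) \<Longrightarrow> (\<lambda>a. f a - g a) \<in> (\<Pi> a\<in>A. cyc a)"
  by (simp add: Pi_iff cyc_diff)

lemma continuous_map_PA_top_sum_diff:
  assumes "finite F" "F \<subseteq> A"
  shows "continuous_map (PA_top A) euclidean (\<lambda>g. \<Sum>a\<in>F. g a - f a)"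
  unfolding continuous_map_atin limitin_canonical_iff
proof
  fix g
  assume g: "g \<in> topspace (PA_top A)"
  have "((\<lambda>h. h a) \<longlongrightarrow> g a) (atin (PA_top A) g)" if "a \<in> F" for a
    using continuous_map_PA_top_coordinate[of a A] that assms(2) g
    unfolding continuous_map_atin by auto
  then show "((\<lambda>h. \<Sum>a\<in>F. h a - f a) \<longlongrightarrow> (\<Sum>a\<in>F. g a - f a)) (atin (PA_top A) g)"
    by (intro tendsto_sum tendsto_diff tendsto_const)
qed

lemma continuous_map_infsum_PA:
  assumes "absolutely_summable A"
  shows "continuous_map (PA_top A) euclidean (\<lambda>f. infsum f A)"
  unfolding continuous_map_atin limitin_canonical_iff
proof (intro ballI topological_tendstoI)
  fix f S
  assume f: "f \<in> topspace (PA_top A)" and S: "open S" "infsum f A \<in> S"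
  define W where "W = (\<lambda>x. infsum f A + x) -` S"
  have W: "open W" "0 \<in> W"
    using S unfolding W_def by (auto intro!: open_vimage continuous_intros)
  obtain V where V: "open V" "0 \<in> V" "\<And>x y. x \<in> V \<Longrightarrow> y \<in> V \<Longrightarrow> x + y \<in> W"
    "\<And>x y. x \<in> V \<Longrightarrow> y \<in> V \<Longrightarrow> x - y \<in> W"
    using nhds_0_half[OF W] by metis
  obtain F where F: "finite F" "F \<subseteq> A" "\<And>h. h \<in> (\<Pi> a\<in>A. cyc a) \<Longrightarrow> infsum h (A - F) \<in> V"
    using absolutely_summable_uniform_tail[OF assms V(1,2)] by metis
  \<comment> \<open>Split g - f into its coordinates in F, controlled by the product topology, and a
    uniformly small tail over A - F.\<close>
  have "((\<lambda>g. \<Sum>a\<in>F. g a - f a) \<longlongrightarrow> 0) (atin (PA_top A) f)"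
    using bspec[OF continuous_map_PA_top_sum_diff[OF F(1,2), of f, unfolded continuous_map_atin] f]
    by simp
  then have "\<forall>\<^sub>F g in atin (PA_top A) f. (\<Sum>a\<in>F. g a - f a) \<in> V"
    using V(1,2) by (rule topological_tendstoD)
  moreover have "\<forall>\<^sub>F g in atin (PA_top A) f. g \<in> topspace (PA_top A)"
    unfolding eventually_atin using f by auto
  ultimately show "\<forall>\<^sub>F g in atin (PA_top A) f. infsum g A \<in> S"
  proof eventually_elim
    case (elim g)
    have fP: "f \<in> (\<Pi> a\<in>A. cyc a)" and gP: "g \<in> (\<Pi> a\<in>A. cyc a)"
      using f elim(2) by (simp_all add: topspace_PA_topD)
    have hP: "(\<lambda>a. g a - f a) \<in> (\<Pi> a\<in>A. cyc a)"
      using gP fP by (rule Pi_cyc_diff)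
    have "infsum g A - infsum f A = infsum (\<lambda>a. g a - f a) A"
      using assms fP gP by (intro infsum_diff[symmetric] summable_on_Pi_cyc)
    also have "\<dots> = (\<Sum>a\<in>F. g a - f a) + infsum (\<lambda>a. g a - f a) (A - F)"
      by (rule infsum_split_finite[OF summable_on_Pi_cyc[OF assms hP] F(1,2)])
    also have "\<dots> \<in> W"
      using elim(1) F(3)[OF hP] by (rule V(3))
    finally show ?case
      by (simp add: W_def)
  qed
qed

lemma top_independent_infsum:
  assumes "absolutely_summable A" "top_independent A" "open W" "0 \<in> W"
  obtains U where "open U" "0 \<in> U"
    "\<And>f a. f \<in> (\<Pi> a\<in>A. cyc a) \<Longrightarrow> infsum f A \<in> U \<Longrightarrow> a \<in> A \<Longrightarrow> f a \<in> W"
proof -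
  obtain U where U: "open U" "0 \<in> U" and small:
    "\<forall>F (z :: 'a \<Rightarrow> int). finite F \<and> F \<subseteq> A \<and> (\<Sum>a\<in>F. zsmul (z a) a) \<in> U \<longrightarrow>
        (\<forall>a\<in>F. zsmul (z a) a \<in> W)"
    using assms(2-4) unfolding top_independent_def by blast
  have "f a \<in> W" if f: "f \<in> (\<Pi> a\<in>A. cyc a)" and fU: "infsum f A \<in> U" and a: "a \<in> A" for f a
  proof -
    obtain z where z: "\<And>a. a \<in> A \<Longrightarrow> f a = zsmul (z a) a"
      using Pi_cyc_coefficients[OF f] by metis
    have "(sum f \<longlongrightarrow> infsum f A) (finite_subsets_at_top A)"
      using has_sum_infsum[OF summable_on_Pi_cyc[OF assms(1) f]] by (simp add: has_sum_def)
    then have "\<forall>\<^sub>F E in finite_subsets_at_top A. sum f E \<in> U"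
      using U(1) fU by (rule topological_tendstoD)
    then obtain X where X: "finite X" "X \<subseteq> A" "\<forall>E. finite E \<and> X \<subseteq> E \<and> E \<subseteq> A \<longrightarrow> sum f E \<in> U"
      unfolding eventually_finite_subsets_at_top by blast
    have E: "finite (insert a X)" "insert a X \<subseteq> A"
      using X(1,2) a by auto
    have "sum f (insert a X) = (\<Sum>b\<in>insert a X. zsmul (z b) b)"
      using E(2) z by (intro sum.cong) auto
    moreover have "sum f (insert a X) \<in> U"
      using X(3) E by blast
    ultimately have "\<forall>b\<in>insert a X. zsmul (z b) b \<in> W"
      using small[rule_format, of "insert a X" z] E by simp
    then show ?thesis
      using z a by simp
  qed
  then show ?thesis
    using U that by metis
qed

lemma inj_on_infsum_PA:
  assumes "absolutely_summable A" "top_independent A"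
  shows "inj_on (\<lambda>f. infsum f A) (topspace (PA_top A))"
proof (rule inj_onI)
  fix f g
  assume f: "f \<in> topspace (PA_top A)" and g: "g \<in> topspace (PA_top A)"
    and eq: "infsum f A = infsum g A"
  have fP: "f \<in> (\<Pi> a\<in>A. cyc a)" and gP: "g \<in> (\<Pi> a\<in>A. cyc a)"
    using f g by (simp_all add: topspace_PA_topD)
  have hP: "(\<lambda>a. f a - g a) \<in> (\<Pi> a\<in>A. cyc a)"
    using fP gP by (rule Pi_cyc_diff)
  have h0: "infsum (\<lambda>a. f a - g a) A = 0"
    using assms(1) fP gP eq by (simp add: infsum_diff summable_on_Pi_cyc)
  have "f a = g a" if a: "a \<in> A" for a
  proof (rule ccontr)
    assume "f a \<noteq> g a"
    then obtain W where W: "open W" "0 \<in> W" "f a - g a \<notin> W"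
      using t1_space[of 0 "f a - g a"] by auto
    obtain U where U: "open U" "0 \<in> U"
      "\<And>h b. h \<in> (\<Pi> a\<in>A. cyc a) \<Longrightarrow> infsum h A \<in> U \<Longrightarrow> b \<in> A \<Longrightarrow> h b \<in> W"
      using top_independent_infsum[OF assms W(1,2)] by metis
    have "f a - g a \<in> W"
      using U(3)[OF hP _ a] U(2) h0 by simp
    with W(3) show False ..
  qed
  then show "f = g"
    using f g by (intro PiE_ext[of f A cyc g]) (simp_all add: topspace_PA_top)
qed

lemma openin_PA_top_nhdE:
  assumes "openin (PA_top A) S" "f \<in> S"
  obtains F W where "finite F" "F \<subseteq> A" "open W" "0 \<in> W"
    "\<And>g. g \<in> topspace (PA_top A) \<Longrightarrow> \<forall>a\<in>F. g a - f a \<in> W \<Longrightarrow> g \<in> S"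
proof -
  have "\<exists>U. finite {i \<in> A. U i \<noteq> cyc i} \<and> (\<forall>i\<in>A. openin (top_of_set (cyc i)) (U i)) \<and>
      f \<in> Pi\<^sub>E A U \<and> Pi\<^sub>E A U \<subseteq> S"
    using bspec[OF assms(1)[unfolded PA_top_def openin_product_topology_alt] assms(2)] by simp
  then obtain U where U: "finite {i \<in> A. U i \<noteq> cyc i}" "\<forall>i\<in>A. openin (top_of_set (cyc i)) (U i)"
    "f \<in> Pi\<^sub>E A U" "Pi\<^sub>E A U \<subseteq> S"
    by blast
  have "\<forall>i\<in>A. \<exists>T. open T \<and> U i = cyc i \<inter> T"
    using U(2) by (simp add: openin_open)
  then obtain T where T: "\<forall>i\<in>A. open (T i) \<and> U i = cyc i \<inter> T i"
    by metis
  define F where "F = {i \<in> A. U i \<noteq> cyc i}"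
  define W where "W = (\<Inter>i\<in>F. (\<lambda>x. f i + x) -` T i)"
  have F: "finite F" "F \<subseteq> A"
    using U(1) by (auto simp: F_def)
  have "open W"
    unfolding W_def using F T by (intro open_INT ballI open_vimage continuous_intros) auto
  moreover have "0 \<in> W"
    using U(3) T F(2) by (auto simp: W_def PiE_iff)
  moreover have "g \<in> S" if g: "g \<in> topspace (PA_top A)" "\<forall>a\<in>F. g a - f a \<in> W" for g
  proof -
    have "g i \<in> U i" if i: "i \<in> A" for i
    proof (cases "i \<in> F")
      case True
      then have "g i \<in> T i"
        using g(2) by (force simp: W_def)
      then show ?thesis
        using g(1) i T by (simp add: topspace_PA_top PiE_iff)
    next
      case False
      then show ?thesis
        using g(1) i by (simp add: F_def topspace_PA_top PiE_iff)
    qed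
    then have "g \<in> Pi\<^sub>E A U"
      using g(1) by (simp add: topspace_PA_top PiE_iff)
    with U(4) show ?thesis
      by blast
  qed
  ultimately show ?thesis
    using F that by metis
qed

lemma openin_PA_top_cylinder:
  assumes "finite F" "F \<subseteq> A" "open W"
  shows "openin (PA_top A) {g \<in> topspace (PA_top A). \<forall>a\<in>F. g a \<in> W}"
proof -
  have "openin (PA_top A) {g \<in> topspace (PA_top A). g a \<in> W}" if "a \<in> F" for a
    using that assms(2,3)
    by (intro openin_continuous_map_preimage[OF continuous_map_PA_top_coordinate]) auto
  then have "openin (PA_top A) ((\<Inter>a\<in>F. {g \<in> topspace (PA_top A). g a \<in> W}) \<inter> topspace (PA_top A))"
    using assms(1) by (intro openin_INT)
  also have "(\<Inter>a\<in>F. {g \<in> topspace (PA_top A). g a \<in> W}) \<inter> topspace (PA_top A)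
      = {g \<in> topspace (PA_top A). \<forall>a\<in>F. g a \<in> W}"
    by auto
  finally show ?thesis .
qed

lemma open_map_infsum_PA:
  assumes "absolutely_summable A" "top_independent A"
  shows "open_map (PA_top A) (top_of_set ((\<lambda>f. infsum f A) ` topspace (PA_top A))) (\<lambda>f. infsum f A)"
  unfolding open_map_def
proof (intro allI impI)
  fix S
  assume S: "openin (PA_top A) S"
  let ?Y = "(\<lambda>f. infsum f A) ` topspace (PA_top A)"
  show "openin (top_of_set ?Y) ((\<lambda>f. infsum f A) ` S)"
  proof (subst openin_subopen, intro ballI)
    fix y
    assume "y \<in> (\<lambda>f. infsum f A) ` S"
    then obtain f where f: "f \<in> S" and y: "y = infsum f A"
      by blast
    have fP: "f \<in> (\<Pi> a\<in>A. cyc a)"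
      using openin_subset[OF S] f topspace_PA_topD by blast
    obtain F W where F: "finite F" "F \<subseteq> A" "open W" "0 \<in> W"
      "\<And>g. g \<in> topspace (PA_top A) \<Longrightarrow> \<forall>a\<in>F. g a - f a \<in> W \<Longrightarrow> g \<in> S"
      using openin_PA_top_nhdE[OF S f] by metis
    obtain U where U: "open U" "0 \<in> U"
      "\<And>h a. h \<in> (\<Pi> a\<in>A. cyc a) \<Longrightarrow> infsum h A \<in> U \<Longrightarrow> a \<in> A \<Longrightarrow> h a \<in> W"
      using top_independent_infsum[OF assms F(3,4)] by metis
    define T where "T = ?Y \<inter> (\<lambda>x. x - y) -` U"
    have "openin (top_of_set ?Y) T"
      unfolding T_def using U(1)
      by (intro openin_subtopology_Int2) (auto simp: open_openin[symmetric] intro!: open_vimage continuous_intros)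
    moreover have "y \<in> T"
      using openin_subset[OF S] f y U(2) by (auto simp: T_def)
    moreover have "T \<subseteq> (\<lambda>f. infsum f A) ` S"
    proof
      fix x
      assume "x \<in> T"
      then obtain g where g: "g \<in> topspace (PA_top A)" "x = infsum g A" "infsum g A - y \<in> U"
        by (auto simp: T_def)
      have gP: "g \<in> (\<Pi> a\<in>A. cyc a)"
        using g(1) by (rule topspace_PA_topD)
      have hP: "(\<lambda>a. g a - f a) \<in> (\<Pi> a\<in>A. cyc a)"
        using gP fP by (rule Pi_cyc_diff)
      have "infsum (\<lambda>a. g a - f a) A \<in> U"
        using assms(1) gP fP g(3) y by (simp add: infsum_diff summable_on_Pi_cyc)
      then have "\<forall>a\<in>F. g a - f a \<in> W"
        using U(3)[OF hP] F(2) by auto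
      then have "g \<in> S"
        by (rule F(5)[OF g(1)])
      with g(2) show "x \<in> (\<lambda>f. infsum f A) ` S"
        by blast
    qed
    ultimately show "\<exists>T. openin (top_of_set ?Y) T \<and> y \<in> T \<and> T \<subseteq> (\<lambda>f. infsum f A) ` S"
      by blast
  qed
qed

lemma embedding_map_infsum_PA:
  assumes "absolutely_summable A" "top_independent A"
  shows "embedding_map (PA_top A) euclidean (\<lambda>f. infsum f A)"
  unfolding embedding_map_def
proof (rule bijective_open_imp_homeomorphic_map)
  show "continuous_map (PA_top A) (top_of_set ((\<lambda>f. infsum f A) ` topspace (PA_top A))) (\<lambda>f. infsum f A)"
    using continuous_map_infsum_PA[OF assms(1)] by (rule continuous_map_into_subtopology) blast
qed (use open_map_infsum_PA[OF assms] inj_on_infsum_PA[OF assms] in auto)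

lemma infsum_PA_add:
  assumes "absolutely_summable A" "f \<in> topspace (PA_top A)" "g \<in> topspace (PA_top A)"
  shows "infsum (\<lambda>a\<in>A. f a + g a) A = infsum f A + infsum g A"
proof -
  have "infsum (\<lambda>a\<in>A. f a + g a) A = infsum (\<lambda>a. f a + g a) A"
    by (rule infsum_cong) simp
  also have "\<dots> = infsum f A + infsum g A"
    using assms by (intro infsum_add summable_on_Pi_cyc topspace_PA_topD)
  finally show ?thesis .
qed

definition SA_comb :: "'a::ab_group_add set \<Rightarrow> 'a set \<Rightarrow> ('a \<Rightarrow> int) \<Rightarrow> 'a \<Rightarrow> 'a" where
  "SA_comb A E z = (\<lambda>a\<in>A. if a \<in> E then zsmul (z a) a else 0)"

lemma SA_comb_in_SA:
  assumes "finite E"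
  shows "SA_comb A E z \<in> SA A"
proof -
  have "{a \<in> A. SA_comb A E z a \<noteq> 0} \<subseteq> E"
    by (auto simp: SA_comb_def)
  then show ?thesis
    using assms finite_subset
    by (auto simp: SA_def SA_comb_def topspace_PA_top PiE_iff)
qed

lemma kalton_SA_comb:
  assumes "finite E" "E \<subseteq> A"
  shows "kalton A (SA_comb A E z) = (\<Sum>a\<in>E. zsmul (z a) a)"
proof -
  have "kalton A (SA_comb A E z) = sum (SA_comb A E z) E"
    unfolding kalton_def using assms by (intro sum.mono_neutral_left) (auto simp: SA_comb_def)
  also have "\<dots> = (\<Sum>a\<in>E. zsmul (z a) a)"
    using assms(2) by (intro sum.cong) (auto simp: SA_comb_def)
  finally show ?thesis .
qed

lemma limitin_SA_comb:
  "limitin (PA_top A) (\<lambda>E. SA_comb A E z) (\<lambda>a\<in>A. zsmul (z a) a) (finite_subsets_at_top A)"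
  unfolding PA_top_def limitin_componentwise
proof (intro conjI ballI)
  show "\<forall>\<^sub>F E in finite_subsets_at_top A.
      SA_comb A E z \<in> topspace (product_topology (\<lambda>a. top_of_set (cyc a)) A)"
    by (intro always_eventually allI) (auto simp: SA_comb_def PiE_iff)
  fix i
  assume i: "i \<in> A"
  have "\<forall>\<^sub>F E in finite_subsets_at_top A. SA_comb A E z i = zsmul (z i) i"
    unfolding eventually_finite_subsets_at_top using i by (intro exI[of _ "{i}"]) (auto simp: SA_comb_def)
  then show "limitin (top_of_set (cyc i)) (\<lambda>E. SA_comb A E z i) ((\<lambda>a\<in>A. zsmul (z a) a) i)
      (finite_subsets_at_top A)"
    using i by (intro limitin_eventually) auto
qed simp

lemma absolutely_summable_if_continuous_extension:
  assumes "continuous_map (PA_top A) euclidean \<phi>" "\<forall>f\<in>SA A. \<phi> f = kalton A f"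
  shows "absolutely_summable A"
  unfolding absolutely_summable_iff summable_on_def has_sum_def
proof
  fix z
  have "limitin euclidean (\<phi> \<circ> (\<lambda>E. SA_comb A E z)) (\<phi> (\<lambda>a\<in>A. zsmul (z a) a)) (finite_subsets_at_top A)"
    by (rule continuous_map_limit[OF assms(1) limitin_SA_comb])
  then have "((\<lambda>E. \<phi> (SA_comb A E z)) \<longlongrightarrow> \<phi> (\<lambda>a\<in>A. zsmul (z a) a)) (finite_subsets_at_top A)"
    by (simp add: o_def)
  moreover have "\<forall>\<^sub>F E in finite_subsets_at_top A. \<phi> (SA_comb A E z) = (\<Sum>a\<in>E. zsmul (z a) a)"
    using assms(2) by (intro eventually_finite_subsets_at_top_weakI) (simp add: SA_comb_in_SA kalton_SA_comb)
  ultimately have "((\<lambda>E. \<Sum>a\<in>E. zsmul (z a) a) \<longlongrightarrow> \<phi> (\<lambda>a\<in>A. zsmul (z a) a)) (finite_subsets_at_top A)"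
    by (rule Lim_transform_eventually)
  then show "\<exists>s. (sum (\<lambda>a. zsmul (z a) a) \<longlongrightarrow> s) (finite_subsets_at_top A)"
    by blast
qed

lemma top_independent_if_embedding:
  assumes "0 \<notin> A" "continuous_map (PA_top A) euclidean \<phi>" "\<forall>f\<in>SA A. \<phi> f = kalton A f"
    "embedding_map (PA_top A) euclidean \<phi>"
  shows "top_independent A"
  unfolding top_independent_def
proof (intro conjI allI impI)
  show "0 \<notin> A"
    by (rule assms(1))
  fix W :: "'a set"
  assume W: "open W \<and> 0 \<in> W"
  have \<phi>_comb: "\<phi> (SA_comb A E z) = (\<Sum>a\<in>E. zsmul (z a) a)" if "finite E" "E \<subseteq> A" for E z
    using assms(3) that by (simp add: SA_comb_in_SA kalton_SA_comb)
  have comb_top: "SA_comb A E z \<in> topspace (PA_top A)" if "finite E" for E z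
    using SA_comb_in_SA[OF that] by (simp add: SA_def)
  define zero where "zero = SA_comb A {} (\<lambda>_. 0)"
  have zero: "zero \<in> topspace (PA_top A)" "\<phi> zero = 0" "\<And>a. a \<in> A \<Longrightarrow> zero a = 0"
    using comb_top[of "{}" "\<lambda>_. 0"] \<phi>_comb[of "{}" "\<lambda>_. 0"] by (simp_all add: zero_def SA_comb_def)
  have "openin (PA_top A) {g \<in> topspace (PA_top A). \<phi> g \<in> W}"
    using assms(2) W by (simp add: openin_continuous_map_preimage)
  then obtain F W' where F: "finite F" "F \<subseteq> A" "open W'" "0 \<in> W'"
    "\<And>g. g \<in> topspace (PA_top A) \<Longrightarrow> \<forall>a\<in>F. g a - zero a \<in> W' \<Longrightarrow> g \<in> {g \<in> topspace (PA_top A). \<phi> g \<in> W}"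
    using openin_PA_top_nhdE zero W by (metis (no_types, lifting) mem_Collect_eq)
  \<comment> \<open>Coordinates outside F are unconstrained near zero, so whole cyclic groups land in W.\<close>
  have outside: "zsmul k b \<in> W" if b: "b \<in> A - F" for b k
  proof -
    have "\<forall>a\<in>F. SA_comb A {b} (\<lambda>_. k) a - zero a \<in> W'"
      using b F(2,4) zero(3) by (auto simp: SA_comb_def)
    then have "\<phi> (SA_comb A {b} (\<lambda>_. k)) \<in> W"
      using F(5)[OF comb_top] by blast
    then show ?thesis
      using \<phi>_comb[of "{b}" "\<lambda>_. k"] b by simp
  qed
  define B where "B = {g \<in> topspace (PA_top A). \<forall>a\<in>F. g a \<in> W}"
  have hom: "homeomorphic_map (PA_top A) (top_of_set (\<phi> ` topspace (PA_top A))) \<phi>"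
    using assms(4) by (simp add: embedding_map_def)
  have "openin (top_of_set (\<phi> ` topspace (PA_top A))) (\<phi> ` B)"
    using homeomorphic_imp_open_map[OF hom] openin_PA_top_cylinder[OF F(1,2)] W
    unfolding open_map_def B_def by blast
  then obtain U where U: "open U" "\<phi> ` B = \<phi> ` topspace (PA_top A) \<inter> U"
    by (auto simp: openin_open)
  have "zero \<in> B"
    using zero W F(2) by (auto simp: B_def)
  then have "\<phi> zero \<in> U"
    using U(2) by blast
  then have "0 \<in> U"
    using zero(2) by simp
  moreover have "\<forall>a\<in>E. zsmul (z a) a \<in> W"
    if E: "finite E \<and> E \<subseteq> A \<and> (\<Sum>a\<in>E. zsmul (z a) a) \<in> U" for E and z :: "'a \<Rightarrow> int"
  proof
    fix a
    assume a: "a \<in> E"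
    have "\<phi> (SA_comb A E z) \<in> \<phi> ` topspace (PA_top A)"
      using comb_top E by blast
    moreover have "\<phi> (SA_comb A E z) \<in> U"
      using E \<phi>_comb by simp
    ultimately have "\<phi> (SA_comb A E z) \<in> \<phi> ` B"
      using U(2) by blast
    then have "SA_comb A E z \<in> B"
      using homeomorphic_imp_injective_map[OF hom] comb_top E unfolding B_def inj_on_def by auto
    show "zsmul (z a) a \<in> W"
    proof (cases "a \<in> F")
      case True
      with \<open>SA_comb A E z \<in> B\<close> have "SA_comb A E z a \<in> W"
        by (simp add: B_def)
      with a E show ?thesis
        by (auto simp: SA_comb_def)
    next
      case False
      with a E show ?thesis
        by (intro outside) auto
    qed
  qed
  ultimately show "\<exists>U. open U \<and> 0 \<in> U \<and> (\<forall>F z. finite F \<and> F \<subseteq> A \<and> (\<Sum>a\<in>F. zsmul (z a) a) \<in> U \<longrightarrow>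
      (\<forall>a\<in>F. zsmul (z a) a \<in> W))"
    using U(1) by blast
qed

lemma continuous_map_kalton_if_extension:
  assumes "continuous_map (PA_top A) euclidean \<phi>" "\<forall>f\<in>SA A. \<phi> f = kalton A f"
  shows "continuous_map (SA_top A) euclidean (kalton A)"
  unfolding SA_top_def
proof (rule continuous_map_eq[OF continuous_map_from_subtopology[OF assms(1)]])
  fix f
  assume "f \<in> topspace (subtopology (PA_top A) (SA A))"
  then show "\<phi> f = kalton A f"
    using assms(2) by simp
qed

theorem theorem7p2:
  fixes A :: "'a::{topological_ab_group_add,t2_space} set"
  assumes "0 \<notin> A"
  shows "(continuous_map (SA_top A) euclidean (kalton A) \<and>
          (\<exists>\<phi>. continuous_map (PA_top A) euclidean \<phi> \<and>
               (\<forall>f\<in>SA A. \<phi> f = kalton A f) \<and>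
               (\<forall>f\<in>topspace (PA_top A). \<forall>g\<in>topspace (PA_top A).
                   \<phi> (\<lambda>a\<in>A. f a + g a) = \<phi> f + \<phi> g) \<and>
               embedding_map (PA_top A) euclidean \<phi>))
     \<longleftrightarrow> absolutely_summable A \<and> top_independent A"
proof -
  have summable_independent: "absolutely_summable A \<and> top_independent A"
    if "continuous_map (PA_top A) euclidean \<phi>" "\<forall>f\<in>SA A. \<phi> f = kalton A f"
      "embedding_map (PA_top A) euclidean \<phi>" for \<phi>
    using absolutely_summable_if_continuous_extension[OF that(1,2)]
      top_independent_if_embedding[OF assms that] by blast
  have summation_map: "continuous_map (PA_top A) euclidean (\<lambda>f. infsum f A)"
    "\<forall>f\<in>SA A. infsum f A = kalton A f"
    "\<forall>f\<in>topspace (PA_top A). \<forall>g\<in>topspace (PA_top A).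
       infsum (\<lambda>a\<in>A. f a + g a) A = infsum f A + infsum g A"
    "embedding_map (PA_top A) euclidean (\<lambda>f. infsum f A)"
    if "absolutely_summable A" "top_independent A"
    using continuous_map_infsum_PA infsum_SA infsum_PA_add embedding_map_infsum_PA that by blast+
  show ?thesis
    using summable_independent summation_map continuous_map_kalton_if_extension by blast
qed

end
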